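(* For $n\in\mathbb{Z}_S\setminus\{0\}$ let $D_n=\{(\mathbf v^1,\mathbf v^2)\in P(\mathbb{Z}_S^2)\times P(\mathbb{Z}_S^2):\det(\mathbf v^1,\mathbf v^2)=n\}$. Then $D_n$ is invariant under the diagonal action of $\Gamma_2=\mathrm{SL}_2(\mathbb{Z}_S)$ and is the disjoint union of exactly $\varphi(\mathrm d(n))$ distinct $\Gamma_2$-orbits, with representatives $\begin{pmatrix}1&\ell\\0&n\end{pmatrix}$ for $\ell\in\{0,1,\dots,\mathrm d(n)-1\}$ with $\gcd(\ell,\mathrm d(n))=1$.
   Context: $S=\{\infty,p_1,\dots,p_s\}$ with distinct primes, $\mathbb{Z}_S=\mathbb{Z}[p_1^{-1},\dots,p_s^{-1}]$, $P(\mathbb{Z}_S^2)=\mathrm{SL}_2(\mathbb{Z}_S)\mathbf e_1$. Pairs of vectors are viewed as $2\times2$ matrices with those columns. For $n\in\mathbb{Z}_S\setminus\{0\}$, $\mathrm d(n)=\prod_{p\in S}|n|_p$, which equals $|m|$ where $n=m p_1^{k_1}\cdots p_s^{k_s}$ with $m\in\mathbb{Z}$ coprime to $p_1\cdots p_s$. $\varphi$ is Euler's totient function. *)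

theory Defs
  imports "HOL-Number_Theory.Number_Theory"
begin

text \<open>S-integers Z_S = Z[1/p_1,...,1/p_s] as a subset of the rationals;
  S is the finite set of finite primes p_1,...,p_s.\<close>
definition ZS :: "nat set \<Rightarrow> rat set" where
  "ZS S = {q. \<exists>(a::int) (k::nat). q = of_int a / of_nat ((\<Prod>S) ^ k)}"

type_synonym vec2 = "rat \<times> rat"
text \<open>A 2x2 matrix (a,b,c,d) stands for the matrix with rows (a b) and (c d).\<close>
type_synonym mat2 = "rat \<times> rat \<times> rat \<times> rat"

fun mvec :: "mat2 \<Rightarrow> vec2 \<Rightarrow> vec2" where
  "mvec (a, b, c, d) (x, y) = (a * x + b * y, c * x + d * y)"

definition det2 :: "vec2 \<Rightarrow> vec2 \<Rightarrow> rat" where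
  "det2 v w = fst v * snd w - snd v * fst w"

definition SL2 :: "nat set \<Rightarrow> mat2 set" where
  "SL2 S = {(a, b, c, d). a \<in> ZS S \<and> b \<in> ZS S \<and> c \<in> ZS S \<and> d \<in> ZS S \<and> a * d - b * c = 1}"

definition PZS :: "nat set \<Rightarrow> vec2 set" where
  "PZS S = (\<lambda>g. mvec g (1, 0)) ` SL2 S"

definition Dn :: "nat set \<Rightarrow> rat \<Rightarrow> (vec2 \<times> vec2) set" where
  "Dn S n = {(v1, v2). v1 \<in> PZS S \<and> v2 \<in> PZS S \<and> det2 v1 v2 = n}"

definition dact :: "mat2 \<Rightarrow> vec2 \<times> vec2 \<Rightarrow> vec2 \<times> vec2" where
  "dact g vw = (mvec g (fst vw), mvec g (snd vw))"

definition orbit2 :: "nat set \<Rightarrow> vec2 \<times> vec2 \<Rightarrow> (vec2 \<times> vec2) set" where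
  "orbit2 S x = (\<lambda>g. dact g x) ` SL2 S"

definition dS :: "nat set \<Rightarrow> rat \<Rightarrow> nat" where
  "dS S n = (THE m::nat. \<exists>(m'::int) (k::nat \<Rightarrow> int). coprime m' (int (\<Prod>S)) \<and>
      n = of_int m' * (\<Prod>p\<in>S. of_nat p powi k p) \<and> m = nat \<bar>m'\<bar>)"

definition repr :: "rat \<Rightarrow> nat \<Rightarrow> vec2 \<times> vec2" where
  "repr n l = ((1, 0), (of_nat l, n))"

end

theory Submission
  imports Defs
begin

text \<open>Write n = d u with d = d(n) a positive integer prime to every p in S and u a unit of Z_S.
  Because d is prime to S, an integer that is a multiple of d in Z_S is a multiple of d in Z, and
  every element of Z_S is congruent modulo d Z_S to an integer in [0, d).
  An element of Gamma_2 with first column v moves (v, w) in D_n to (e_1, (t, n)). The stabiliser of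
  e_1 consists of the matrices with rows (1 s) and (0 1); they replace t by t + s n = t + s u d, so t
  can be made an integer l in [0, d), and (l, n) is primitive exactly when gcd(l, d) = 1.
  Conversely, an element of Gamma_2 carrying (e_1, (l, n)) to (e_1, (l', n)) fixes e_1, so l' - l
  lies in n Z_S, hence in d Z, which forces l = l' for 0 <= l, l' < d.\<close>

lemma ZS_iff: "q \<in> ZS S \<longleftrightarrow> (\<exists>(a::int) k. q = of_int a / of_nat (\<Prod>S) ^ k)"
  unfolding ZS_def by simp

lemma ZS_of_int [simp]: "of_int a \<in> ZS S"
  unfolding ZS_iff by (rule exI[of _ a], rule exI[of _ 0]) simp

lemma ZS_of_nat [simp]: "of_nat a \<in> ZS S"
  using ZS_of_int[of "int a" S] by simp

lemma ZS_0 [simp]: "0 \<in> ZS S" and ZS_1 [simp]: "1 \<in> ZS S"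
  using ZS_of_int[of 0 S] ZS_of_int[of 1 S] by simp_all

lemma ZS_uminus: "q \<in> ZS S \<Longrightarrow> - q \<in> ZS S"
  unfolding ZS_iff by (metis minus_divide_left of_int_minus)

definition ZS_unit :: "nat set \<Rightarrow> rat \<Rightarrow> bool" where
  "ZS_unit S u \<longleftrightarrow> u \<noteq> 0 \<and> u \<in> ZS S \<and> inverse u \<in> ZS S"

lemma ZS_unit_uminus: "ZS_unit S u \<Longrightarrow> ZS_unit S (- u)"
  unfolding ZS_unit_def by (auto intro: ZS_uminus)

lemma int_split_off_prime_part:
  fixes a :: int
  assumes "finite S" and "\<forall>p\<in>S. prime p" and "a \<noteq> 0"
  shows "\<exists>m e. coprime m (int (\<Prod>S)) \<and> a = m * (\<Prod>p\<in>S. int p ^ e p)"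
  using assms
proof (induction S rule: finite_induct)
  case empty
  then show ?case by simp
next
  case (insert p S)
  then obtain m e where m: "coprime m (int (\<Prod>S))" and a: "a = m * (\<Prod>q\<in>S. int q ^ e q)"
    by auto
  have "prime (int p)" using insert.prems(1) by simp
  moreover have "m \<noteq> 0" using a insert.prems(2) by auto
  ultimately obtain m' where m': "m = int p ^ multiplicity (int p) m * m'" "\<not> int p dvd m'"
    using multiplicity_decompose' not_prime_unit by blast
  have "m' dvd m" using m'(1) by (metis dvd_triv_right)
  then have "coprime m' (int (\<Prod>S))"
    by (rule coprime_divisors[OF _ dvd_refl m])
  moreover have "coprime m' (int p)"
    using prime_imp_coprime[OF \<open>prime (int p)\<close> m'(2)] by (simp add: coprime_commute)
  ultimately have "coprime m' (int (\<Prod>(insert p S)))"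
    using insert.hyps by simp
  define e' where "e' = e(p := multiplicity (int p) m)"
  have "(\<Prod>q\<in>S. int q ^ e' q) = (\<Prod>q\<in>S. int q ^ e q)"
    using insert.hyps(2) by (intro prod.cong) (auto simp: e'_def)
  then have "a = m' * (\<Prod>q\<in>insert p S. int q ^ e' q)"
    using insert.hyps a m'(1) by (simp add: e'_def mult_ac)
  with \<open>coprime m' (int (\<Prod>(insert p S)))\<close> show ?case by blast
qed

lemma card_coprime_less_eq_totient:
  assumes "0 < d"
  shows "card {l. l < d \<and> coprime l d} = totient d"
proof (cases "d = 1")
  case True
  then have "{l. l < d \<and> coprime l d} = {0}" by auto
  then show ?thesis using True by simp
next
  case False
  then have "{l. l < d \<and> coprime l d} = totatives d"
    using assms by (auto simp: in_totatives_iff le_less intro!: gr0I elim: coprime_0_left_iff[THEN iffD1])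
  then show ?thesis by (simp add: totient_def)
qed

fun mmul :: "mat2 \<Rightarrow> mat2 \<Rightarrow> mat2" where
  "mmul (a, b, c, d) (a', b', c', d') =
     (a * a' + b * c', a * b' + b * d', c * a' + d * c', c * b' + d * d')"

fun madj :: "mat2 \<Rightarrow> mat2" where
  "madj (a, b, c, d) = (d, - b, - c, a)"

lemma mvec_mmul: "mvec (mmul g h) v = mvec g (mvec h v)"
  by (cases g; cases h; cases v) (simp add: algebra_simps)

lemma dact_mmul: "dact (mmul g h) x = dact g (dact h x)"
  unfolding dact_def by (simp add: mvec_mmul)

lemma dact_one [simp]: "dact (1, 0, 0, 1) x = x"
  by (cases x) (auto simp: dact_def)

lemma det2_mvec: "det2 (mvec (a, b, c, d) v) (mvec (a, b, c, d) w) = (a * d - b * c) * det2 v w"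
  by (cases v; cases w) (simp add: det2_def algebra_simps)

lemma SL2_one [simp]: "(1, 0, 0, 1) \<in> SL2 S"
  unfolding SL2_def by simp

lemma SL2_madj: "g \<in> SL2 S \<Longrightarrow> madj g \<in> SL2 S"
  unfolding SL2_def by (auto intro: ZS_uminus simp: algebra_simps)

lemma mmul_madj_SL2: "g \<in> SL2 S \<Longrightarrow> mmul (madj g) g = (1, 0, 0, 1)"
  unfolding SL2_def by (auto simp: algebra_simps)

lemma PZS_iff: "v \<in> PZS S \<longleftrightarrow> (\<exists>b d. (fst v, b, snd v, d) \<in> SL2 S)"
  unfolding PZS_def by force

lemma e1_PZS: "(1, 0) \<in> PZS S"
  unfolding PZS_def by (rule image_eqI[of _ _ "(1, 0, 0, 1)"]) simp_all

lemma orbit2_self: "x \<in> orbit2 S x"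
  unfolding orbit2_def by (rule image_eqI[of _ _ "(1, 0, 0, 1)"]) simp_all

locale finite_prime_set =
  fixes S :: "nat set"
  assumes finite_S: "finite S" and prime_S: "\<forall>p\<in>S. prime p"
begin

lemma prod_S_pos: "0 < \<Prod>S"
  using prime_S by (intro prod_pos) (auto intro: prime_gt_0_nat)

lemma of_nat_prod_S_nonzero: "(of_nat (\<Prod>S) :: rat) \<noteq> 0"
  using prod_S_pos by (simp del: of_nat_prod)

lemma ZS_add: assumes "q \<in> ZS S" "r \<in> ZS S" shows "q + r \<in> ZS S"
proof -
  obtain a k where q: "q = of_int a / of_nat (\<Prod>S) ^ k" using assms(1) ZS_iff by blast
  obtain b j where r: "r = of_int b / of_nat (\<Prod>S) ^ j" using assms(2) ZS_iff by blast
  have "q + r = of_int (a * int (\<Prod>S) ^ j + b * int (\<Prod>S) ^ k) / of_nat (\<Prod>S) ^ (k + j)"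
    using of_nat_prod_S_nonzero by (simp add: q r field_simps power_add)
  then show ?thesis unfolding ZS_iff by blast
qed

lemma ZS_mult: assumes "q \<in> ZS S" "r \<in> ZS S" shows "q * r \<in> ZS S"
proof -
  obtain a k where q: "q = of_int a / of_nat (\<Prod>S) ^ k" using assms(1) ZS_iff by blast
  obtain b j where r: "r = of_int b / of_nat (\<Prod>S) ^ j" using assms(2) ZS_iff by blast
  have "q * r = of_int (a * b) / of_nat (\<Prod>S) ^ (k + j)"
    by (simp add: q r power_add)
  then show ?thesis unfolding ZS_iff by blast
qed

lemma ZS_power: "q \<in> ZS S \<Longrightarrow> q ^ k \<in> ZS S"
  by (induction k) (simp_all add: ZS_mult)

lemma ZS_prod: "(\<And>x. x \<in> A \<Longrightarrow> f x \<in> ZS S) \<Longrightarrow> prod f A \<in> ZS S"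
  by (induction A rule: infinite_finite_induct) (simp_all add: ZS_mult)

lemma ZS_inverse_prime: assumes "p \<in> S" shows "inverse (of_nat p) \<in> ZS S"
proof -
  have "\<Prod>S = p * \<Prod>(S - {p})"
    using finite_S assms by (simp add: prod.remove)
  then have "inverse (of_nat p) = of_int (int (\<Prod>(S - {p}))) / (of_nat (\<Prod>S) ^ 1 :: rat)"
    using of_nat_prod_S_nonzero by (simp add: field_simps del: of_nat_prod)
  then show ?thesis unfolding ZS_iff by blast
qed

lemma ZS_unit_prod_powi: "ZS_unit S (\<Prod>p\<in>S. of_nat p powi k p)"
proof -
  have "of_nat p powi j \<in> ZS S" if "p \<in> S" for p j
    using ZS_power ZS_inverse_prime[OF that] by (simp add: power_int_def)
  moreover have "inverse (\<Prod>p\<in>S. (of_nat p :: rat) powi k p) = (\<Prod>p\<in>S. of_nat p powi (- k p))"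
    by (simp add: prod_inversef[symmetric] power_int_minus comp_def)
  moreover have "(\<Prod>p\<in>S. (of_nat p :: rat) powi k p) \<noteq> 0"
    using prime_S finite_S by (auto simp del: of_nat_prod)
  ultimately show ?thesis
    unfolding ZS_unit_def by (auto intro: ZS_prod)
qed

lemma int_dvd_if_ZS_multiple:
  assumes "coprime m (int (\<Prod>S))" and "z \<in> ZS S" and "of_int x = of_int m * z"
  shows "m dvd x"
proof -
  obtain a k where z: "z = of_int a / of_nat (\<Prod>S) ^ k" using assms(2) ZS_iff by blast
  have "of_int (x * int (\<Prod>S) ^ k) = (of_int (m * a) :: rat)"
    using assms(3) of_nat_prod_S_nonzero by (simp add: z del: of_nat_prod)
  then have "m dvd x * int (\<Prod>S) ^ k"
    unfolding of_int_eq_iff by simp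
  moreover have "coprime m (int (\<Prod>S) ^ k)" using assms(1) by simp
  ultimately show ?thesis using coprime_dvd_mult_left_iff by blast
qed

lemma abs_eq_if_ZS_unit_multiples:
  assumes "coprime m1 (int (\<Prod>S))" "coprime m2 (int (\<Prod>S))"
    and "ZS_unit S u1" "ZS_unit S u2" and "of_int m1 * u1 = of_int m2 * u2"
  shows "\<bar>m1\<bar> = \<bar>m2\<bar>"
proof -
  have "u1 * inverse u2 \<in> ZS S" "u2 * inverse u1 \<in> ZS S"
    using assms(3,4) by (simp_all add: ZS_unit_def ZS_mult)
  moreover have "of_int m2 = of_int m1 * (u1 * inverse u2)" "of_int m1 = of_int m2 * (u2 * inverse u1)"
    using assms(3,4,5) by (simp_all add: ZS_unit_def field_simps)
  ultimately have "m1 dvd m2" "m2 dvd m1"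
    using int_dvd_if_ZS_multiple assms(1,2) by blast+
  then show ?thesis by (rule zdvd_antisym_abs)
qed

lemma coprime_if_ZS_bezout:
  assumes "coprime m (int (\<Prod>S))" and "f \<in> ZS S" "g \<in> ZS S"
    and "of_int l * f + of_int m * g = 1"
  shows "coprime l m"
proof (rule coprimeI)
  fix c assume "c dvd l" "c dvd m"
  then obtain l' m' where "l = c * l'" "m = c * m'" by (elim dvdE)
  have "coprime c (int (\<Prod>S))"
    using coprime_divisors[OF \<open>c dvd m\<close> dvd_refl assms(1)] .
  moreover have "of_int l' * f + of_int m' * g \<in> ZS S"
    using assms(2,3) by (intro ZS_add ZS_mult ZS_of_int)
  moreover have "of_int 1 = of_int c * (of_int l' * f + of_int m' * g)"
    using assms(4) \<open>l = c * l'\<close> \<open>m = c * m'\<close> by (simp add: algebra_simps)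
  ultimately have "c dvd 1"
    by (rule int_dvd_if_ZS_multiple)
  then show "is_unit c" .
qed

lemma ZS_eq_int_plus_multiple:
  assumes "coprime m (int (\<Prod>S))" and "0 < m" and "t \<in> ZS S"
  obtains l z where "0 \<le> l" "l < m" "z \<in> ZS S" "t = of_int l + of_int m * z"
proof -
  obtain a k where t: "t = of_int a / of_nat (\<Prod>S) ^ k" using assms(3) ZS_iff by blast
  obtain v where v: "[int (\<Prod>S) ^ k * v = 1] (mod m)"
    using cong_solve_coprime_int assms(1) by (metis coprime_commute coprime_power_left_iff)
  define l where "l = (a * v) mod m"
  have "[l = a * v] (mod m)"
    unfolding l_def by (simp add: cong_def)
  then have "[l * int (\<Prod>S) ^ k = a * v * int (\<Prod>S) ^ k] (mod m)"
    by (rule cong_mult) (rule cong_refl)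
  also have "[a * v * int (\<Prod>S) ^ k = a] (mod m)"
    using cong_mult[OF cong_refl[of a] v] by (simp add: mult_ac)
  finally obtain c where c: "a = l * int (\<Prod>S) ^ k + m * c"
    by (auto simp: cong_iff_lin)
  show ?thesis
  proof (rule that)
    show "0 \<le> l" "l < m" using assms(2) by (simp_all add: l_def)
    show "of_int c / of_nat (\<Prod>S) ^ k \<in> ZS S" unfolding ZS_iff by blast
    show "t = of_int l + of_int m * (of_int c / of_nat (\<Prod>S) ^ k)"
      using of_nat_prod_S_nonzero by (simp add: t c field_simps del: of_nat_prod)
  qed
qed

lemma ZS_eq_coprime_times_prod_powi:
  assumes "n \<in> ZS S" and "n \<noteq> 0"
  obtains m k where "coprime m (int (\<Prod>S))" "n = of_int m * (\<Prod>p\<in>S. of_nat p powi k p)"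
proof -
  obtain a j where n: "n = of_int a / of_nat (\<Prod>S) ^ j" using assms(1) ZS_iff by blast
  then have "a \<noteq> 0" using assms(2) by auto
  then obtain m e where m: "coprime m (int (\<Prod>S))" and a: "a = m * (\<Prod>p\<in>S. int p ^ e p)"
    using int_split_off_prime_part finite_S prime_S by blast
  have "(\<Prod>p\<in>S. (of_nat p :: rat) powi (int (e p) - int j)) = (\<Prod>p\<in>S. of_nat p ^ e p / of_nat p ^ j)"
    using prime_S by (intro prod.cong) (auto simp: power_int_diff)
  also have "\<dots> = (\<Prod>p\<in>S. of_nat p ^ e p) / of_nat (\<Prod>S) ^ j"
    by (simp add: prod_dividef prod_power_distrib)
  finally have "n = of_int m * (\<Prod>p\<in>S. of_nat p powi (int (e p) - int j))"
    by (simp add: n a)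
  with m show ?thesis by (rule that)
qed

lemma dS_eqI:
  assumes "coprime m (int (\<Prod>S))" and "n = of_int m * (\<Prod>p\<in>S. of_nat p powi k p)"
  shows "dS S n = nat \<bar>m\<bar>"
  unfolding dS_def
proof (rule the_equality)
  show "\<exists>m' k. coprime m' (int (\<Prod>S)) \<and> n = of_int m' * (\<Prod>p\<in>S. of_nat p powi k p) \<and> nat \<bar>m\<bar> = nat \<bar>m'\<bar>"
    using assms by blast
next
  fix d assume "\<exists>m' k'. coprime m' (int (\<Prod>S)) \<and> n = of_int m' * (\<Prod>p\<in>S. of_nat p powi k' p) \<and> d = nat \<bar>m'\<bar>"
  then obtain m' k' where m': "coprime m' (int (\<Prod>S))"
    and n: "n = of_int m' * (\<Prod>p\<in>S. of_nat p powi k' p)" and d: "d = nat \<bar>m'\<bar>"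
    by blast
  have "of_int m' * (\<Prod>p\<in>S. of_nat p powi k' p) = of_int m * (\<Prod>p\<in>S. (of_nat p :: rat) powi k p)"
    using n assms(2) by simp
  then have "\<bar>m'\<bar> = \<bar>m\<bar>"
    by (rule abs_eq_if_ZS_unit_multiples[OF m' assms(1) ZS_unit_prod_powi ZS_unit_prod_powi])
  then show "d = nat \<bar>m\<bar>" using d by simp
qed

lemma ZS_factorization:
  assumes "n \<in> ZS S" and "n \<noteq> 0"
  obtains d u where "0 < d" "coprime d (\<Prod>S)" "ZS_unit S u" "n = of_nat d * u" "dS S n = d"
proof -
  obtain m k where m: "coprime m (int (\<Prod>S))" and n: "n = of_int m * (\<Prod>p\<in>S. of_nat p powi k p)"
    using ZS_eq_coprime_times_prod_powi assms by blast
  define u where "u = sgn (of_int m) * (\<Prod>p\<in>S. (of_nat p :: rat) powi k p)"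
  have "m \<noteq> 0" using n assms(2) by auto
  show ?thesis
  proof (rule that)
    show "0 < nat \<bar>m\<bar>" using \<open>m \<noteq> 0\<close> by simp
    show "coprime (nat \<bar>m\<bar>) (\<Prod>S)" using m by simp
    show "ZS_unit S u"
      unfolding u_def using \<open>m \<noteq> 0\<close> ZS_unit_prod_powi ZS_unit_uminus by (cases "m > 0") auto
    show "n = of_nat (nat \<bar>m\<bar>) * u"
      unfolding n u_def by (simp add: mult.assoc[symmetric] abs_mult_sgn)
    show "dS S n = nat \<bar>m\<bar>" using m n by (rule dS_eqI)
  qed
qed

lemma SL2_mmul: assumes "g \<in> SL2 S" "h \<in> SL2 S" shows "mmul g h \<in> SL2 S"
proof -
  obtain a b c d a' b' c' d' where gh: "g = (a, b, c, d)" "h = (a', b', c', d')"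
    by (cases g; cases h) auto
  have "(a * a' + b * c') * (c * b' + d * d') - (a * b' + b * d') * (c * a' + d * c')
      = (a * d - b * c) * (a' * d' - b' * c')"
    by (simp add: algebra_simps)
  then show ?thesis
    using assms unfolding gh SL2_def by (auto intro!: ZS_add ZS_mult)
qed

lemma orbit2_eq:
  assumes "y \<in> orbit2 S x"
  shows "orbit2 S y = orbit2 S x"
proof -
  obtain g where g: "g \<in> SL2 S" "y = dact g x" using assms unfolding orbit2_def by auto
  have "x = dact (madj g) y"
    using g by (simp add: dact_mmul[symmetric] mmul_madj_SL2)
  have "orbit2 S w \<subseteq> orbit2 S z" if "w = dact h z" "h \<in> SL2 S" for z w h
    using that unfolding orbit2_def by (auto simp: dact_mmul[symmetric] intro!: imageI SL2_mmul)
  then show ?thesis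
    using g \<open>x = dact (madj g) y\<close> SL2_madj by blast
qed

lemma PZS_mvec: assumes "g \<in> SL2 S" "v \<in> PZS S" shows "mvec g v \<in> PZS S"
proof -
  obtain h where "h \<in> SL2 S" "v = mvec h (1, 0)" using assms(2) unfolding PZS_def by auto
  then show ?thesis
    unfolding PZS_def using SL2_mmul[OF assms(1)] by (auto simp: mvec_mmul[symmetric])
qed

lemma Dn_dact: assumes "g \<in> SL2 S" "x \<in> Dn S n" shows "dact g x \<in> Dn S n"
proof -
  obtain a b c d where g: "g = (a, b, c, d)" "a * d - b * c = 1"
    using assms(1) unfolding SL2_def by auto
  then show ?thesis
    using assms PZS_mvec unfolding Dn_def dact_def by (auto simp: det2_mvec)
qed

lemma orbit2_subset_Dn: "x \<in> Dn S n \<Longrightarrow> orbit2 S x \<subseteq> Dn S n"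
  unfolding orbit2_def using Dn_dact by blast

context
  fixes n u :: rat and d :: nat
  assumes d_pos: "0 < d" and coprime_d: "coprime d (\<Prod>S)"
    and unit_u: "ZS_unit S u" and n_eq: "n = of_nat d * u"
begin

lemma n_ZS: "n \<in> ZS S"
  using unit_u by (simp add: n_eq ZS_unit_def ZS_mult)

lemma ZS_divide_u: "z \<in> ZS S \<Longrightarrow> z / u \<in> ZS S"
  using unit_u by (simp add: ZS_unit_def ZS_mult divide_inverse)

lemma coprime_int_d: "coprime (int d) (int (\<Prod>S))"
  using coprime_d by (simp only: coprime_int_iff)

lemma repr_in_Dn_iff: "repr n l \<in> Dn S n \<longleftrightarrow> coprime l d"
proof -
  have "(of_nat l, n) \<in> PZS S \<longleftrightarrow> coprime (int l) (int d)"
  proof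
    assume "(of_nat l, n) \<in> PZS S"
    then obtain b e where "(of_nat l, b, n, e) \<in> SL2 S" unfolding PZS_iff by auto
    then have b: "b \<in> ZS S" and e: "e \<in> ZS S" and det: "of_nat l * e - b * n = 1"
      unfolding SL2_def by auto
    have "- b * u \<in> ZS S" using b unit_u by (simp add: ZS_unit_def ZS_mult ZS_uminus)
    moreover have "of_int (int l) * e + of_int (int d) * (- b * u) = 1"
      using det by (simp add: n_eq algebra_simps)
    ultimately show "coprime (int l) (int d)"
      by (rule coprime_if_ZS_bezout[OF coprime_int_d e])
  next
    assume "coprime (int l) (int d)"
    then obtain x y where "x * int l + y * int d = 1"
      using bezout_int by (metis coprime_iff_gcd_eq_1 gcd.commute)
    then have "(of_int (x * int l + y * int d) :: rat) = 1" by simp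
    then have "of_nat l * of_int x - (- (of_int y / u)) * n = 1"
      using unit_u by (simp add: n_eq ZS_unit_def field_simps)
    moreover have "- (of_int y / u) \<in> ZS S" using ZS_divide_u ZS_uminus by simp
    ultimately have "(of_nat l, - (of_int y / u), n, of_int x) \<in> SL2 S"
      unfolding SL2_def using n_ZS by simp
    then show "(of_nat l, n) \<in> PZS S" unfolding PZS_iff by auto
  qed
  then show ?thesis
    using e1_PZS unfolding Dn_def repr_def det2_def by simp
qed

lemma Dn_orbit_contains_repr:
  assumes "x \<in> Dn S n"
  obtains l where "l < d" "coprime l d" "repr n l \<in> orbit2 S x"
proof -
  obtain v1 v2 w1 w2 where x: "x = ((v1, v2), (w1, w2))" "(v1, v2) \<in> PZS S" "v1 * w2 - v2 * w1 = n"
    using assms unfolding Dn_def det2_def by auto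
  obtain b e where v: "(v1, b, v2, e) \<in> SL2 S" using x(2) unfolding PZS_iff by auto
  define h where "h = madj (v1, b, v2, e)"
  define t where "t = e * w1 - b * w2"
  have h: "h \<in> SL2 S" unfolding h_def using v by (rule SL2_madj)
  have "dact h x = ((1, 0), (t, n))"
    using v x(3) unfolding x(1) h_def t_def dact_def SL2_def by (auto simp: algebra_simps)
  then have "((1, 0), (t, n)) \<in> Dn S n" using Dn_dact[OF h assms] by simp
  then have "t \<in> ZS S" unfolding Dn_def PZS_iff SL2_def by auto
  then obtain l z where l: "0 \<le> l" "l < int d" and z: "z \<in> ZS S"
    and t: "t = of_int l + of_int (int d) * z"
    using ZS_eq_int_plus_multiple[OF coprime_int_d] d_pos by (metis of_nat_0_less_iff)
  define g where "g = mmul (1, - (z / u), 0, 1) h"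
  have "(1, - (z / u), 0, 1) \<in> SL2 S"
    unfolding SL2_def using ZS_uminus[OF ZS_divide_u[OF z]] by simp
  then have g: "g \<in> SL2 S" unfolding g_def using h by (rule SL2_mmul)
  have "dact g x = dact (1, - (z / u), 0, 1) ((1, 0), (t, n))"
    by (simp add: g_def dact_mmul \<open>dact h x = ((1, 0), (t, n))\<close>)
  also have "\<dots> = repr n (nat l)"
    using unit_u l(1) by (simp add: dact_def repr_def t n_eq ZS_unit_def field_simps)
  finally have "repr n (nat l) \<in> orbit2 S x" unfolding orbit2_def using g by (metis image_eqI)
  moreover have "coprime (nat l) d"
    using orbit2_subset_Dn[OF assms] calculation repr_in_Dn_iff by blast
  moreover have "nat l < d" using l by simp
  ultimately show ?thesis using that by blast
qed

lemma inj_on_repr_orbit: "inj_on (\<lambda>l. orbit2 S (repr n l)) {..<d}"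
proof (rule inj_onI)
  fix l1 l2 assume "l1 \<in> {..<d}" "l2 \<in> {..<d}"
    and "orbit2 S (repr n l1) = orbit2 S (repr n l2)"
  then have "repr n l2 \<in> orbit2 S (repr n l1)" using orbit2_self by metis
  then obtain g where "g \<in> SL2 S" "dact g (repr n l1) = repr n l2"
    unfolding orbit2_def by auto
  then obtain b where b: "b \<in> ZS S" and "of_nat l2 = of_nat l1 + b * n"
    unfolding SL2_def dact_def repr_def by auto
  have "b * u \<in> ZS S" using b unit_u by (simp add: ZS_unit_def ZS_mult)
  moreover have "of_int (int l2 - int l1) = of_int (int d) * (b * u)"
    using \<open>of_nat l2 = of_nat l1 + b * n\<close> by (simp add: n_eq algebra_simps)
  ultimately have "int d dvd int l2 - int l1"
    by (rule int_dvd_if_ZS_multiple[OF coprime_int_d])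
  then have "[l2 = l1] (mod d)"
    by (simp add: cong_iff_dvd_diff cong_int_iff[symmetric])
  then show "l1 = l2"
    using \<open>l1 \<in> {..<d}\<close> \<open>l2 \<in> {..<d}\<close> cong_less_imp_eq_nat[of l2 d l1] by simp
qed

lemma bij_betw_repr_orbits:
  "bij_betw (\<lambda>l. orbit2 S (repr n l)) {l. l < d \<and> coprime l d} (orbit2 S ` Dn S n)"
  unfolding bij_betw_def
proof
  show "inj_on (\<lambda>l. orbit2 S (repr n l)) {l. l < d \<and> coprime l d}"
    using inj_on_repr_orbit by (rule inj_on_subset) auto
  show "(\<lambda>l. orbit2 S (repr n l)) ` {l. l < d \<and> coprime l d} = orbit2 S ` Dn S n"
  proof
    show "(\<lambda>l. orbit2 S (repr n l)) ` {l. l < d \<and> coprime l d} \<subseteq> orbit2 S ` Dn S n"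
      using repr_in_Dn_iff by auto
    show "orbit2 S ` Dn S n \<subseteq> (\<lambda>l. orbit2 S (repr n l)) ` {l. l < d \<and> coprime l d}"
    proof
      fix X assume "X \<in> orbit2 S ` Dn S n"
      then obtain x where "x \<in> Dn S n" "X = orbit2 S x" by auto
      moreover obtain l where "l < d" "coprime l d" "repr n l \<in> orbit2 S x"
        using Dn_orbit_contains_repr[OF \<open>x \<in> Dn S n\<close>] .
      ultimately have "X = orbit2 S (repr n l)" using orbit2_eq by simp
      with \<open>l < d\<close> \<open>coprime l d\<close>
      show "X \<in> (\<lambda>l. orbit2 S (repr n l)) ` {l. l < d \<and> coprime l d}" by blast
    qed
  qed
qed

end

end

theorem lemma3p1:
  fixes S :: "nat set" and n :: rat
  assumes "finite S" and "\<forall>p\<in>S. prime p"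
    and "n \<in> ZS S" and "n \<noteq> 0"
  shows "(\<forall>g\<in>SL2 S. \<forall>x\<in>Dn S n. dact g x \<in> Dn S n)
    \<and> (\<forall>l. l < dS S n \<and> coprime l (dS S n) \<longrightarrow> repr n l \<in> Dn S n)
    \<and> orbit2 S ` Dn S n = (\<lambda>l. orbit2 S (repr n l)) ` {l. l < dS S n \<and> coprime l (dS S n)}
    \<and> inj_on (\<lambda>l. orbit2 S (repr n l)) {l. l < dS S n \<and> coprime l (dS S n)}
    \<and> card (orbit2 S ` Dn S n) = totient (dS S n)"
proof -
  interpret finite_prime_set S using assms(1,2) by unfold_locales
  obtain d u where d: "0 < d" "coprime d (\<Prod>S)" and u: "ZS_unit S u"
    and n: "n = of_nat d * u" and dS: "dS S n = d"
    using ZS_factorization[OF assms(3,4)] .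
  have bij: "bij_betw (\<lambda>l. orbit2 S (repr n l)) {l. l < dS S n \<and> coprime l (dS S n)} (orbit2 S ` Dn S n)"
    unfolding dS by (rule bij_betw_repr_orbits[OF d u n])
  have "\<forall>g\<in>SL2 S. \<forall>x\<in>Dn S n. dact g x \<in> Dn S n"
    using Dn_dact by blast
  moreover have "\<forall>l. l < dS S n \<and> coprime l (dS S n) \<longrightarrow> repr n l \<in> Dn S n"
    using repr_in_Dn_iff[OF d u n] by (simp add: dS)
  moreover have "card (orbit2 S ` Dn S n) = totient (dS S n)"
    using bij_betw_same_card[OF bij] card_coprime_less_eq_totient d(1) by (simp add: dS)
  ultimately show ?thesis
    using bij_betw_imp_surj_on[OF bij] bij_betw_imp_inj_on[OF bij] by simp
qed

end
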